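(* Let $\alpha>-1$, $\beta>-1$, $c>0$, $\omega_{\alpha,\beta}(x)=(1-x)^{\alpha}(1+x)^{\beta}$, and $\mathcal{F}_c^{(\alpha,\beta)}[\phi](x)=\int_{-1}^{1}e^{c(xy-1)}\phi(y)\omega_{\alpha,\beta}(y)dy$ on $L^2((-1,1),\omega_{\alpha,\beta}(x)dx)$. Let $\psi_n^{(\alpha,\beta)}(\cdot;c)$ be an eigenfunction of $\mathcal{F}_c^{(\alpha,\beta)}$ with eigenvalue $\mu_n^{(\alpha,\beta)}(c)\ne0$, normalized so that $\int_{-1}^1(\psi_n^{(\alpha,\beta)}(x;c))^2\omega_{\alpha,\beta}(x)dx=(\mu_n^{(\alpha,\beta)}(c))^2$. Then for all $x\in(-1,1)$, $$|\psi_n^{(\alpha,\beta)}(x;c)|\le\frac{1}{\mathbf{P}_0^{(\alpha,\beta)}(x)}.$$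
   Context: $\mathbf{P}_0^{(\alpha,\beta)}$ is the normalized Jacobi polynomial of degree $0$, i.e. the constant $\mathbf{P}_0^{(\alpha,\beta)}=1/\sqrt{a_0^{\alpha,\beta}}$ with $a_0^{\alpha,\beta}=\int_{-1}^1\omega_{\alpha,\beta}(x)dx=\frac{2^{\alpha+\beta+1}\Gamma(\alpha+1)\Gamma(\beta+1)}{\Gamma(\alpha+\beta+2)}$, so that $\mathbf{P}_0^{(\alpha,\beta)}$ has unit norm in $L^2((-1,1),\omega_{\alpha,\beta}(x)dx)$. *)

theory Defs
  imports "HOL-Analysis.Analysis"
begin

definition jacobi_weight :: "real \<Rightarrow> real \<Rightarrow> real \<Rightarrow> real" where
  "jacobi_weight \<alpha> \<beta> x = (1 - x) powr \<alpha> * (1 + x) powr \<beta>"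

definition jacobi_a0 :: "real \<Rightarrow> real \<Rightarrow> real" where
  "jacobi_a0 \<alpha> \<beta> = (LINT y:{-1<..<1}|lborel. jacobi_weight \<alpha> \<beta> y)"

text \<open>normalized Jacobi polynomial of degree 0 (a constant function of x)\<close>
definition jacobi_P0 :: "real \<Rightarrow> real \<Rightarrow> real \<Rightarrow> real" where
  "jacobi_P0 \<alpha> \<beta> x = 1 / sqrt (jacobi_a0 \<alpha> \<beta>)"

definition F_transform :: "real \<Rightarrow> real \<Rightarrow> real \<Rightarrow> (real \<Rightarrow> real) \<Rightarrow> real \<Rightarrow> real" where
  "F_transform c \<alpha> \<beta> \<phi> x =
     (LINT y:{-1<..<1}|lborel. exp (c * (x * y - 1)) * \<phi> y * jacobi_weight \<alpha> \<beta> y)"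

end

theory Submission
  imports Defs
begin

text \<open>The kernel \<open>exp (c (x y - 1))\<close> is at most \<open>1\<close> on the square, so
  \<open>|\<mu>| |\<psi>(x)| \<le> \<integral> |\<psi>| \<omega>\<close>. The weighted AM-GM inequality
  \<open>|\<psi>| \<le> (t \<psi>\<^sup>2 + 1/t)/2\<close> turns this into \<open>|\<mu>| |\<psi>(x)| \<le> (t \<mu>\<^sup>2 + a\<^sub>0/t)/2\<close> for every
  \<open>t > 0\<close>, and the choice \<open>t = |\<psi>(x)|/|\<mu>|\<close> gives \<open>\<psi>(x)\<^sup>2 \<le> a\<^sub>0 = 1/(P\<^sub>0)\<^sup>2\<close>.\<close>

lemma jacobi_weight_nonneg: "0 \<le> jacobi_weight \<alpha> \<beta> x"
  by (simp add: jacobi_weight_def)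

lemma jacobi_weight_measurable [measurable]: "jacobi_weight \<alpha> \<beta> \<in> borel_measurable borel"
  unfolding jacobi_weight_def by measurable

lemma set_integrable_jacobi_weight:
  assumes "\<alpha> > -1" and "\<beta> > -1"
  shows "set_integrable lborel {-1<..<1} (jacobi_weight \<alpha> \<beta>)"
proof -
  \<comment> \<open>\<open>\<omega>\<^sub>\<alpha>\<^sub>,\<^sub>\<beta>\<close> is a rescaled Beta integrand, transported by \<open>t = (1 + x)/2\<close>.\<close>
  define f where "f t = t powr (\<beta> + 1 - 1) * (1 - t) powr (\<alpha> + 1 - 1)" for t :: real
  have "f integrable_on {0..1}"
    unfolding f_def by (rule integrable_Beta') (use assms in auto)
  moreover have "(\<lambda>x. 2 * x - 1) ` {0..1} = {-1..(1::real)}"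
    using image_affinity_atLeastAtMost[of 2 "-1" 0 "1::real"] by simp
  ultimately have "(\<lambda>x. f ((1/2) * x + 1/2)) integrable_on {-1..1}"
    using integrable_affinity[of f 0 1 "1/2" "1/2"] by simp
  hence scaled: "(\<lambda>x. 2 powr (\<alpha> + \<beta>) * f ((1/2) * x + 1/2)) integrable_on {-1..1}"
    using integrable_on_cmult_left by simp
  have weight_eq: "jacobi_weight \<alpha> \<beta> x = 2 powr (\<alpha> + \<beta>) * f ((1/2) * x + 1/2)"
    if "x \<in> {-1..1}" for x
  proof -
    have "(1/2) * x + 1/2 = (1 + x) / 2" "1 - ((1/2) * x + 1/2) = (1 - x) / 2" by auto
    moreover have "1 + x \<ge> 0" "1 - x \<ge> 0" using that by auto
    ultimately show ?thesis unfolding f_def jacobi_weight_def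
      by (simp add: powr_divide powr_add field_simps)
  qed
  have "jacobi_weight \<alpha> \<beta> integrable_on {-1..1}"
    using scaled by (rule integrable_spike_finite[of "{}", rotated 2]) (auto simp: weight_eq)
  hence "jacobi_weight \<alpha> \<beta> absolutely_integrable_on {-1..1}"
    by (simp add: absolutely_integrable_on_iff_nonneg jacobi_weight_nonneg)
  hence "set_integrable lborel {-1..1} (jacobi_weight \<alpha> \<beta>)"
    unfolding set_integrable_def by (subst (asm) integrable_completion) auto
  thus ?thesis by (rule set_integrable_subset) auto
qed

lemma abs_le_weighted_amgm:
  fixes a t :: real
  assumes "t > 0"
  shows "\<bar>a\<bar> \<le> (t * a\<^sup>2 + 1 / t) / 2"
proof -
  have "0 \<le> (t * \<bar>a\<bar> - 1)\<^sup>2 / t" using assms by simp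
  also have "\<dots> = t * a\<^sup>2 + 1 / t - 2 * \<bar>a\<bar>"
    using assms by (simp add: field_simps power2_eq_square)
  finally show ?thesis by simp
qed

lemma abs_set_integral_le_weighted_amgm:
  fixes g f w :: "'a \<Rightarrow> real"
  assumes "set_integrable M S (\<lambda>y. (f y)\<^sup>2 * w y)" and "set_integrable M S w"
    and "\<And>y. y \<in> S \<Longrightarrow> 0 \<le> w y"
    and "\<And>y. y \<in> S \<Longrightarrow> \<bar>g y\<bar> \<le> \<bar>f y\<bar> * w y"
    and "t > 0"
  shows "\<bar>LINT y:S|M. g y\<bar>
    \<le> (t * (LINT y:S|M. (f y)\<^sup>2 * w y) + (LINT y:S|M. w y) / t) / 2"
proof -
  define h where "h y = (t * ((f y)\<^sup>2 * w y) + w y / t) / 2" for y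
  have h_int: "set_integrable M S h"
    unfolding h_def using assms(1,2)
    by (intro set_integrable_divide set_integral_add set_integrable_mult_right) auto
  have g_le_h: "\<bar>g y\<bar> \<le> h y" if "y \<in> S" for y
  proof -
    have "\<bar>g y\<bar> \<le> \<bar>f y\<bar> * w y" using assms(4) that .
    also have "\<dots> \<le> (t * (f y)\<^sup>2 + 1 / t) / 2 * w y"
      using abs_le_weighted_amgm[OF assms(5)] assms(3)[OF that] by (rule mult_right_mono)
    finally show ?thesis by (simp add: h_def field_simps)
  qed
  have "\<bar>LINT y:S|M. g y\<bar> \<le> (\<integral>y. \<bar>indicator S y * g y\<bar> \<partial>M)"
    unfolding set_lebesgue_integral_def using integral_norm_bound by simp
  also have "\<dots> \<le> (\<integral>y. indicator S y * h y \<partial>M)"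
    using h_int g_le_h assms(3,5)
    by (intro integral_mono') (auto simp: set_integrable_def indicator_def h_def)
  also have "\<dots> = (LINT y:S|M. h y)"
    by (simp add: set_lebesgue_integral_def)
  also have "\<dots> = (t * (LINT y:S|M. (f y)\<^sup>2 * w y) + (LINT y:S|M. w y) / t) / 2"
    using assms(1,2) unfolding h_def by (simp add: set_integrable_mult_right)
  finally show ?thesis .
qed

lemma le_sqrt_of_weighted_amgm_bound:
  fixes m s A :: real
  assumes "m \<noteq> 0" and "0 \<le> s" and "0 \<le> A"
    and "\<And>t. t > 0 \<Longrightarrow> \<bar>m\<bar> * s \<le> (t * m\<^sup>2 + A / t) / 2"
  shows "s \<le> sqrt A"
proof (cases "s = 0")
  case False
  with assms(2) have "s > 0" by simp
  have m: "\<bar>m\<bar> > 0" using assms(1) by simp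
  have "\<bar>m\<bar> * s \<le> (s / \<bar>m\<bar> * m\<^sup>2 + A / (s / \<bar>m\<bar>)) / 2"
    using assms(4)[of "s / \<bar>m\<bar>"] \<open>s > 0\<close> m by simp
  also have "s / \<bar>m\<bar> * m\<^sup>2 = \<bar>m\<bar> * s"
    using m by (simp add: power2_eq_square field_simps)
  also have "A / (s / \<bar>m\<bar>) = \<bar>m\<bar> * (A / s)"
    using m \<open>s > 0\<close> by (simp add: field_simps)
  finally have "\<bar>m\<bar> * s \<le> \<bar>m\<bar> * (A / s)" by (simp add: mult.commute)
  hence "s \<le> A / s" using m mult_le_cancel_left_pos[of "\<bar>m\<bar>" s "A / s"] by simp
  hence "s\<^sup>2 \<le> A" using \<open>s > 0\<close> by (simp add: field_simps power2_eq_square)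
  thus ?thesis by (rule real_le_rsqrt)
qed (use assms in simp)

theorem proposition1:
  fixes \<alpha> \<beta> c \<mu> :: real and \<psi> :: "real \<Rightarrow> real"
  assumes "\<alpha> > -1" and "\<beta> > -1" and "c > 0"
    and "\<psi> \<in> borel_measurable lborel"
    and "set_integrable lborel {-1<..<1} (\<lambda>y. (\<psi> y)\<^sup>2 * jacobi_weight \<alpha> \<beta> y)"
    and "\<mu> \<noteq> 0"
    and "\<forall>x\<in>{-1<..<1}. F_transform c \<alpha> \<beta> \<psi> x = \<mu> * \<psi> x"
    and "(LINT y:{-1<..<1}|lborel. (\<psi> y)\<^sup>2 * jacobi_weight \<alpha> \<beta> y) = \<mu>\<^sup>2"
    and "x \<in> {-1<..<1}"
  shows "\<bar>\<psi> x\<bar> \<le> 1 / jacobi_P0 \<alpha> \<beta> x"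
proof -
  have kernel_bound: "\<bar>exp (c * (x * y - 1)) * \<psi> y * jacobi_weight \<alpha> \<beta> y\<bar>
      \<le> \<bar>\<psi> y\<bar> * jacobi_weight \<alpha> \<beta> y" if "y \<in> {-1<..<1}" for y
  proof -
    have "\<bar>x * y\<bar> \<le> 1" using that assms(9) by (auto simp: abs_mult intro!: mult_le_one)
    hence "exp (c * (x * y - 1)) \<le> 1" using assms(3) by (simp add: mult_nonneg_nonpos)
    thus ?thesis
      by (simp add: abs_mult jacobi_weight_nonneg mult_left_le_one_le mult.assoc)
  qed
  have "\<bar>\<mu>\<bar> * \<bar>\<psi> x\<bar> \<le> (t * \<mu>\<^sup>2 + jacobi_a0 \<alpha> \<beta> / t) / 2" if "t > 0" for t
    using abs_set_integral_le_weighted_amgm[OF assms(5)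
        set_integrable_jacobi_weight[OF assms(1,2)] jacobi_weight_nonneg kernel_bound that]
      assms(7-9)
    by (simp add: F_transform_def jacobi_a0_def abs_mult)
  moreover have "0 \<le> jacobi_a0 \<alpha> \<beta>"
    unfolding jacobi_a0_def set_lebesgue_integral_def
    by (simp add: jacobi_weight_nonneg)
  ultimately have "\<bar>\<psi> x\<bar> \<le> sqrt (jacobi_a0 \<alpha> \<beta>)"
    using le_sqrt_of_weighted_amgm_bound assms(6) by simp
  thus ?thesis by (simp add: jacobi_P0_def)
qed

end
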